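(* Let $\mathcal{X}=\{x_1,\dots,x_N\}$ and $\mathcal{Y}=\{y_1,\dots,y_M\}$ be finite alphabets, $P_X$ a probability mass function on $\mathcal{X}$ with full support, and $U=(u_{ij})$ an $N\times M$ matrix whose $i$-th row is a permutation of $\{1,\dots,M\}$. Fix $h^*\in\{1,\dots,M\}$ and let $\mathcal{Y}^+(h^* )=\{y_j\in\mathcal{Y}:\exists i\in\{1,\dots,N\},\ u_{ij}\ge h^*\}$. Consider the optimization problem $$\min_{P_{Y|X}}\ \max_{y\in\mathcal{S}_Y}\ \ell_{P_{Y|X}\times P_X}(X\to y)$$ over all mechanisms $P_{Y|X}=(p_{ij})$ satisfying $p_{ij}=0$ whenever $u_{ij}<h^*$, together with the additional constraint $\mathcal{S}_Y=\mathcal{Y}^+(h^* )$. Then the mechanism $M^*(h^* )$ defined by $$[M^*(h^* )]_{ij}=\begin{cases}0 & \text{if } u_{ij}<h^*,\\ \frac{1}{M-h^*+1} & \text{otherwise},\end{cases}$$ is an optimal solution of this problem.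
   Context: A privacy mechanism is a conditional distribution $P_{Y|X}$, written as an $N\times M$ row-stochastic matrix with $p_{ij}=P_{Y|X=x_i}(y_j)$. With $P_Y(y)=\sum_x P_X(x)P_{Y|X=x}(y)$, the output support is $\mathcal{S}_Y=\{y\in\mathcal{Y}:P_Y(y)>0\}$ and $P_{X|Y=y}(x)=P_{Y|X=x}(y)P_X(x)/P_Y(y)$. The pointwise maximal leakage (PML) of $y\in\mathcal{S}_Y$ is $\ell_{P_{Y|X}\times P_X}(X\to y)=\log\max_{x\in\mathcal{X}}\frac{P_{X|Y=y}(x)}{P_X(x)}$. The entry $u_{ij}=k$ means that the pair $(x_i,y_j)$ yields the $k$-th lowest utility value for input $x_i$ (all utility values for a given input are distinct). *)

theory Defs
  imports Complex_Main
begin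

text \<open>Indices are 0-based: x_i for i < N, y_j for j < M.
  A mechanism is an N x M row-stochastic matrix p i j = P_{Y|X=x_i}(y_j).\<close>

definition is_mechanism :: "nat \<Rightarrow> nat \<Rightarrow> (nat \<Rightarrow> nat \<Rightarrow> real) \<Rightarrow> bool" where
  "is_mechanism N M p \<longleftrightarrow>
     (\<forall>i<N. \<forall>j<M. 0 \<le> p i j) \<and> (\<forall>i<N. (\<Sum>j<M. p i j) = 1)"

definition out_prob :: "nat \<Rightarrow> (nat \<Rightarrow> real) \<Rightarrow> (nat \<Rightarrow> nat \<Rightarrow> real) \<Rightarrow> nat \<Rightarrow> real" where
  "out_prob N PX p j = (\<Sum>i<N. PX i * p i j)"

definition out_support :: "nat \<Rightarrow> nat \<Rightarrow> (nat \<Rightarrow> real) \<Rightarrow> (nat \<Rightarrow> nat \<Rightarrow> real) \<Rightarrow> nat set" where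
  "out_support N M PX p = {j. j < M \<and> out_prob N PX p j > 0}"

definition posterior :: "nat \<Rightarrow> (nat \<Rightarrow> real) \<Rightarrow> (nat \<Rightarrow> nat \<Rightarrow> real) \<Rightarrow> nat \<Rightarrow> nat \<Rightarrow> real" where
  "posterior N PX p j i = p i j * PX i / out_prob N PX p j"

definition pml :: "nat \<Rightarrow> (nat \<Rightarrow> real) \<Rightarrow> (nat \<Rightarrow> nat \<Rightarrow> real) \<Rightarrow> nat \<Rightarrow> real" where
  "pml N PX p j = ln (Max ((\<lambda>i. posterior N PX p j i / PX i) ` {..<N}))"

definition max_pml :: "nat \<Rightarrow> nat \<Rightarrow> (nat \<Rightarrow> real) \<Rightarrow> (nat \<Rightarrow> nat \<Rightarrow> real) \<Rightarrow> real" where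
  "max_pml N M PX p = Max (pml N PX p ` out_support N M PX p)"

definition Yplus :: "nat \<Rightarrow> nat \<Rightarrow> (nat \<Rightarrow> nat \<Rightarrow> nat) \<Rightarrow> nat \<Rightarrow> nat set" where
  "Yplus N M u h = {j. j < M \<and> (\<exists>i<N. h \<le> u i j)}"

definition feasible :: "nat \<Rightarrow> nat \<Rightarrow> (nat \<Rightarrow> real) \<Rightarrow> (nat \<Rightarrow> nat \<Rightarrow> nat) \<Rightarrow> nat
    \<Rightarrow> (nat \<Rightarrow> nat \<Rightarrow> real) \<Rightarrow> bool" where
  "feasible N M PX u h p \<longleftrightarrow> is_mechanism N M p
     \<and> (\<forall>i<N. \<forall>j<M. u i j < h \<longrightarrow> p i j = 0)
     \<and> out_support N M PX p = Yplus N M u h"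

definition Mstar :: "nat \<Rightarrow> (nat \<Rightarrow> nat \<Rightarrow> nat) \<Rightarrow> nat \<Rightarrow> nat \<Rightarrow> nat \<Rightarrow> real" where
  "Mstar M u h i j = (if u i j < h then 0 else 1 / (real M - real h + 1))"

end

theory Submission
  imports Defs
begin

text \<open>Write \<open>S\<^sub>j\<close> for the prior mass of the inputs allowed to produce \<open>y\<^sub>j\<close>, i.e. those
  with \<open>u\<^sub>i\<^sub>j \<ge> h\<close>. For a feasible mechanism only these inputs contribute to \<open>P\<^sub>Y(y\<^sub>j)\<close>, so
  \<open>P\<^sub>Y(y\<^sub>j) \<le> S\<^sub>j max\<^sub>i p\<^sub>i\<^sub>j\<close>; since the PML of \<open>y\<^sub>j\<close> is \<open>ln (max\<^sub>i p\<^sub>i\<^sub>j / P\<^sub>Y(y\<^sub>j))\<close>, it is at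
  least \<open>ln (1 / S\<^sub>j)\<close>. The mechanism \<open>M\<^sup>*\<close> attains this bound for every output, because
  all nonzero entries of its column \<open>j\<close> are equal. Feasible mechanisms share the support
  \<open>Y\<^sup>+(h)\<close>, so the maximal PML of \<open>M\<^sup>*\<close> is the least one.\<close>

definition allowed_mass :: "nat \<Rightarrow> (nat \<Rightarrow> real) \<Rightarrow> (nat \<Rightarrow> nat \<Rightarrow> nat) \<Rightarrow> nat \<Rightarrow> nat \<Rightarrow> real" where
  "allowed_mass N PX u h j = (\<Sum>i<N. if h \<le> u i j then PX i else 0)"

lemma card_upper_level_set:
  fixes f :: "nat \<Rightarrow> nat"
  assumes "bij_betw f {..<M} {1..M}" and "1 \<le> h"
  shows "card {j. j < M \<and> h \<le> f j} = M + 1 - h"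
proof -
  have inj: "inj_on f {..<M}" and im: "f ` {..<M} = {1..M}"
    using assms(1) by (auto simp: bij_betw_def)
  have "f ` {j. j < M \<and> h \<le> f j} = {h..M}"
  proof
    show "{h..M} \<subseteq> f ` {j. j < M \<and> h \<le> f j}"
    proof
      fix v assume v: "v \<in> {h..M}"
      then have "v \<in> f ` {..<M}"
        using im assms(2) by auto
      then obtain j where "j < M" "f j = v"
        by auto
      with v show "v \<in> f ` {j. j < M \<and> h \<le> f j}" by auto
    qed
  qed (use im in auto)
  moreover have "inj_on f {j. j < M \<and> h \<le> f j}"
    by (rule inj_on_subset[OF inj]) auto
  ultimately have "card {j. j < M \<and> h \<le> f j} = card {h..M}"
    by (metis card_image)
  then show ?thesis
    by simp
qed

lemma Max_image_mono:
  fixes f g :: "'a \<Rightarrow> 'b::linorder"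
  assumes "finite S" and "\<And>x. x \<in> S \<Longrightarrow> f x \<le> g x"
  shows "Max (f ` S) \<le> Max (g ` S)"
proof (cases "S = {}")
  case False
  have "f x \<le> Max (g ` S)" if "x \<in> S" for x
    using assms that by (meson Max_ge finite_imageI image_eqI order_trans)
  with False assms(1) show ?thesis
    by simp
qed simp

lemma posterior_div_prior:
  assumes "PX i > 0"
  shows "posterior N PX p j i / PX i = p i j / out_prob N PX p j"
  using assms by (simp add: posterior_def)

lemma pml_eq_ln_Max_column:
  assumes "\<forall>i<N. PX i > 0" and "out_prob N PX p j > 0"
  shows "pml N PX p j = ln (Max ((\<lambda>i. p i j) ` {..<N}) / out_prob N PX p j)"
proof -
  have "N > 0"
    using assms(2) by (cases "N = 0") (auto simp: out_prob_def)
  have "(\<lambda>i. posterior N PX p j i / PX i) ` {..<N}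
      = (\<lambda>x. x / out_prob N PX p j) ` (\<lambda>i. p i j) ` {..<N}"
    using assms(1) by (auto simp: posterior_div_prior image_image intro!: image_cong)
  also have "Max \<dots> = Max ((\<lambda>i. p i j) ` {..<N}) / out_prob N PX p j"
    using assms(2) \<open>N > 0\<close>
    by (intro mono_Max_commute[symmetric]) (auto simp: mono_def intro: divide_right_mono)
  finally show ?thesis
    by (simp add: pml_def)
qed

lemma out_prob_le_allowed_mass_mult_Max:
  assumes "\<forall>i<N. PX i \<ge> 0" and "\<forall>i<N. u i j < h \<longrightarrow> p i j = 0" and "N > 0"
  shows "out_prob N PX p j \<le> allowed_mass N PX u h j * Max ((\<lambda>i. p i j) ` {..<N})"
proof -
  have "out_prob N PX p j = (\<Sum>i<N. if h \<le> u i j then PX i * p i j else 0)"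
    unfolding out_prob_def using assms(2) by (intro sum.cong) auto
  also have "\<dots> \<le> (\<Sum>i<N. if h \<le> u i j then PX i * Max ((\<lambda>i. p i j) ` {..<N}) else 0)"
    using assms(1) by (intro sum_mono) (auto intro: mult_left_mono)
  also have "\<dots> = allowed_mass N PX u h j * Max ((\<lambda>i. p i j) ` {..<N})"
    unfolding allowed_mass_def sum_distrib_right by (intro sum.cong) auto
  finally show ?thesis .
qed

lemma ln_inverse_allowed_mass_le_pml:
  assumes "\<forall>i<N. PX i > 0" and "\<forall>i<N. u i j < h \<longrightarrow> p i j = 0"
    and "out_prob N PX p j > 0"
  shows "ln (1 / allowed_mass N PX u h j) \<le> pml N PX p j"
proof -
  define S where "S = allowed_mass N PX u h j"
  define m where "m = Max ((\<lambda>i. p i j) ` {..<N})"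
  have "N > 0"
    using assms(3) by (cases "N = 0") (auto simp: out_prob_def)
  then have bound: "out_prob N PX p j \<le> S * m"
    unfolding S_def m_def using assms(1,2)
    by (intro out_prob_le_allowed_mass_mult_Max) (auto simp: less_imp_le)
  have "S \<ge> 0"
    unfolding S_def allowed_mass_def using assms(1) by (intro sum_nonneg) (auto simp: less_imp_le)
  with bound assms(3) have "S > 0"
    by (cases "S = 0") auto
  with bound assms(3) have "1 / S \<le> m / out_prob N PX p j"
    by (simp add: divide_simps mult.commute)
  with \<open>S > 0\<close> have "ln (1 / S) \<le> ln (m / out_prob N PX p j)"
    by (intro ln_mono) simp_all
  then show ?thesis
    unfolding S_def m_def using pml_eq_ln_Max_column[OF assms(1,3)] by simp
qed

lemma allowed_mass_pos_iff:
  assumes "\<forall>i<N. PX i > 0"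
  shows "allowed_mass N PX u h j > 0 \<longleftrightarrow> (\<exists>i<N. h \<le> u i j)"
proof (cases "\<exists>i<N. h \<le> u i j")
  case True
  then show ?thesis
    unfolding allowed_mass_def using assms by (auto intro!: sum_pos2 simp: less_imp_le)
next
  case False
  then have "allowed_mass N PX u h j = 0"
    unfolding allowed_mass_def by (intro sum.neutral) auto
  with False show ?thesis
    by simp
qed

lemma out_prob_Mstar:
  "out_prob N PX (Mstar M u h) j = allowed_mass N PX u h j / (real M - real h + 1)"
  unfolding out_prob_def allowed_mass_def Mstar_def sum_divide_distrib
  by (intro sum.cong) auto

lemma is_mechanism_Mstar:
  assumes "\<forall>i<N. bij_betw (u i) {..<M} {1..M}" and "1 \<le> h" and "h \<le> M"
  shows "is_mechanism N M (Mstar M u h)"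
  unfolding is_mechanism_def
proof (intro conjI allI impI)
  fix i assume "i < N"
  have "(\<Sum>j<M. Mstar M u h i j) = (\<Sum>j<M. if h \<le> u i j then 1 / (real M - real h + 1) else 0)"
    unfolding Mstar_def by (intro sum.cong) auto
  also have "\<dots> = (\<Sum>j\<in>{j\<in>{..<M}. h \<le> u i j}. 1 / (real M - real h + 1))"
    by (rule sum.inter_filter[symmetric]) simp
  also have "\<dots> = real (M + 1 - h) / (real M - real h + 1)"
    using card_upper_level_set[of "u i" M h] assms \<open>i < N\<close>
    by (simp add: Collect_conj_eq lessThan_def)
  also have "\<dots> = 1"
    using assms(3) by (simp add: of_nat_diff)
  finally show "(\<Sum>j<M. Mstar M u h i j) = 1" .
qed (use assms(3) in \<open>simp add: Mstar_def\<close>)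

lemma out_support_Mstar:
  assumes "\<forall>i<N. PX i > 0" and "h \<le> M"
  shows "out_support N M PX (Mstar M u h) = Yplus N M u h"
  using assms allowed_mass_pos_iff[OF assms(1)]
  by (auto simp: out_support_def Yplus_def out_prob_Mstar zero_less_divide_iff)

lemma feasible_Mstar:
  assumes "\<forall>i<N. PX i > 0" and "\<forall>i<N. bij_betw (u i) {..<M} {1..M}"
    and "1 \<le> h" and "h \<le> M"
  shows "feasible N M PX u h (Mstar M u h)"
  using assms is_mechanism_Mstar out_support_Mstar
  by (auto simp: feasible_def Mstar_def)

lemma pml_Mstar:
  assumes "\<forall>i<N. PX i > 0" and "h \<le> M" and "\<exists>i<N. h \<le> u i j"
  shows "pml N PX (Mstar M u h) j = ln (1 / allowed_mass N PX u h j)"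
proof -
  define c where "c = 1 / (real M - real h + 1)"
  have "c > 0"
    using assms(2) by (simp add: c_def)
  have "allowed_mass N PX u h j > 0"
    using allowed_mass_pos_iff[OF assms(1)] assms(3) by blast
  then have out: "out_prob N PX (Mstar M u h) j = allowed_mass N PX u h j * c"
    and "out_prob N PX (Mstar M u h) j > 0"
    using \<open>c > 0\<close> by (auto simp: out_prob_Mstar c_def)
  have "Max ((\<lambda>i. Mstar M u h i j) ` {..<N}) = c"
    using assms(3) \<open>c > 0\<close> by (intro Max_eqI) (auto simp: Mstar_def c_def)
  then show ?thesis
    using pml_eq_ln_Max_column[OF assms(1) \<open>out_prob N PX (Mstar M u h) j > 0\<close>] out \<open>c > 0\<close>
    by simp
qed

theorem theorem1:
  fixes N M h :: nat and PX :: "nat \<Rightarrow> real" and u :: "nat \<Rightarrow> nat \<Rightarrow> nat"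
  assumes "1 \<le> N" and "1 \<le> M"
    and "\<forall>i<N. PX i > 0" and "(\<Sum>i<N. PX i) = 1"
    and "\<forall>i<N. bij_betw (u i) {..<M} {1..M}"
    and "1 \<le> h" and "h \<le> M"
  shows "feasible N M PX u h (Mstar M u h)
    \<and> (\<forall>p. feasible N M PX u h p \<longrightarrow> max_pml N M PX (Mstar M u h) \<le> max_pml N M PX p)"
proof (intro conjI allI impI)
  show "feasible N M PX u h (Mstar M u h)"
    using feasible_Mstar assms(3,5,6,7) by blast
  fix p
  assume feasible: "feasible N M PX u h p"
  then have support: "out_support N M PX p = Yplus N M u h"
    by (simp add: feasible_def)
  have "pml N PX (Mstar M u h) j \<le> pml N PX p j" if "j \<in> Yplus N M u h" for j
  proof -
    have "j < M" and "\<exists>i<N. h \<le> u i j"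
      using that by (auto simp: Yplus_def)
    then have "pml N PX (Mstar M u h) j = ln (1 / allowed_mass N PX u h j)"
      using pml_Mstar assms(3,7) by blast
    also have "\<dots> \<le> pml N PX p j"
    proof (rule ln_inverse_allowed_mass_le_pml)
      show "\<forall>i<N. u i j < h \<longrightarrow> p i j = 0"
        using feasible \<open>j < M\<close> by (simp add: feasible_def)
      show "out_prob N PX p j > 0"
        using support that by (auto simp: out_support_def)
    qed (use assms(3) in simp)
    finally show ?thesis .
  qed
  then show "max_pml N M PX (Mstar M u h) \<le> max_pml N M PX p"
    unfolding max_pml_def out_support_Mstar[OF assms(3,7)] support
    by (intro Max_image_mono) (auto simp: Yplus_def)
qed

end
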